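(* Let $\mathcal H=\bigoplus_{n=1}^\infty\mathbb C^n$, let $\{e_{n,i}\}_{i=1}^n$ be the canonical orthonormal basis of $\mathbb C^n$, and let $V=\bigoplus_{n=1}^\infty V_n$, where $V_n\in M_n(\mathbb C)$ is the upper shift matrix, $V_ne_{n,i}=e_{n,i-1}$ (with $e_{n,0}=0$). Then for every nonzero Hilbert space $\mathcal K$ there is no idempotent $P\in\mathcal B(\mathcal K\otimes\mathcal H)$ such that $P(I\otimes V)=(I\otimes V)P$ and $I\otimes V-P$ is invertible; i.e. $I\otimes V$ is not strongly clean in $\mathcal B(\mathcal K\otimes\mathcal H)$.
   Context: An element $T$ of a unital ring is strongly clean if $T=U+P$ with $U$ invertible, $P$ idempotent and $PT=TP$. *)

theory Defs
  imports "HOL-Analysis.Analysis"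
begin

text \<open>Every Hilbert space is unitarily isomorphic to some l2(J),
  and l2(J) tensor l2(S) is l2(J x S).\<close>

definition l2 :: "'a set \<Rightarrow> ('a \<Rightarrow> complex) set" where
  "l2 S = {f. (\<forall>x. x \<notin> S \<longrightarrow> f x = 0) \<and> (\<lambda>x. (cmod (f x))\<^sup>2) summable_on S}"

definition l2norm :: "'a set \<Rightarrow> ('a \<Rightarrow> complex) \<Rightarrow> real" where
  "l2norm S f = sqrt (infsum (\<lambda>x. (cmod (f x))\<^sup>2) S)"

definition bounded_op :: "'a set \<Rightarrow> (('a \<Rightarrow> complex) \<Rightarrow> ('a \<Rightarrow> complex)) \<Rightarrow> bool" where
  "bounded_op S T \<longleftrightarrow>
     (\<forall>f\<in>l2 S. T f \<in> l2 S) \<and>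
     (\<forall>f\<in>l2 S. \<forall>g\<in>l2 S. T (\<lambda>x. f x + g x) = (\<lambda>x. T f x + T g x)) \<and>
     (\<forall>f\<in>l2 S. \<forall>c. T (\<lambda>x. c * f x) = (\<lambda>x. c * T f x)) \<and>
     (\<exists>C. \<forall>f\<in>l2 S. l2norm S (T f) \<le> C * l2norm S f)"

definition invertible_op :: "'a set \<Rightarrow> (('a \<Rightarrow> complex) \<Rightarrow> ('a \<Rightarrow> complex)) \<Rightarrow> bool" where
  "invertible_op S T \<longleftrightarrow> (\<exists>W. bounded_op S W \<and>
     (\<forall>f\<in>l2 S. W (T f) = f \<and> T (W f) = f))"

definition idempotent_op :: "'a set \<Rightarrow> (('a \<Rightarrow> complex) \<Rightarrow> ('a \<Rightarrow> complex)) \<Rightarrow> bool" where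
  "idempotent_op S P \<longleftrightarrow> (\<forall>f\<in>l2 S. P (P f) = P f)"

definition strongly_clean_op :: "'a set \<Rightarrow> (('a \<Rightarrow> complex) \<Rightarrow> ('a \<Rightarrow> complex)) \<Rightarrow> bool" where
  "strongly_clean_op S T \<longleftrightarrow> (\<exists>U P. bounded_op S U \<and> bounded_op S P \<and>
      invertible_op S U \<and> idempotent_op S P \<and>
      (\<forall>f\<in>l2 S. P (T f) = T (P f)) \<and>
      (\<forall>f\<in>l2 S. T f = (\<lambda>x. U f x + P f x)))"

text \<open>Index set of H = direct sum of C^n, n \<ge> 1: pairs (n,i) with 1 \<le> i \<le> n.\<close>

definition Hidx :: "(nat \<times> nat) set" where
  "Hidx = {(n, i). 1 \<le> i \<and> i \<le> n}"

text \<open>I \<otimes> V on l2(J \<times> Hidx): (V_n e_{n,i} = e_{n,i-1}, e_{n,0} = 0), i.e.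
  in coordinates (V f)(n,i) = f(n,i+1) for i < n and 0 for i = n.\<close>

definition IV :: "(('j \<times> (nat \<times> nat)) \<Rightarrow> complex) \<Rightarrow> (('j \<times> (nat \<times> nat)) \<Rightarrow> complex)" where
  "IV f = (\<lambda>(j, (n, i)). if (n, i) \<in> Hidx \<and> i < n then f (j, (n, Suc i)) else 0)"

end

theory Submission
  imports Defs "HOL-Library.Function_Algebras"
begin

text \<open>Write \<open>T = I \<otimes> V - P\<close>. If \<open>V\<^sup>n x = 0\<close> then \<open>P x = x\<close>, by induction on \<open>n\<close>: the
  induction hypothesis gives \<open>P (V x) = V x\<close>, so \<open>y = x - P x\<close> satisfies \<open>V y = 0 = P y\<close>, hence
  \<open>T y = 0\<close> and \<open>y = 0\<close> because \<open>T\<close> is injective. Apply this to \<open>x = e\<^sub>j \<otimes> (e\<^sub>n\<^sub>,\<^sub>1 + \<dots> + e\<^sub>n\<^sub>,\<^sub>n)\<close>: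
  then \<open>T x = V x - x = -e\<^sub>j \<otimes> e\<^sub>n\<^sub>,\<^sub>n\<close> is a unit vector while \<open>\<parallel>x\<parallel> = \<surd>n\<close>, so \<open>T\<^sup>-\<^sup>1\<close> is unbounded.\<close>

lemma idempotent_fixes_nilpotent_vector:
  fixes V P :: "'v::ab_group_add \<Rightarrow> 'v"
  assumes diff_closed: "\<And>x y. x \<in> L \<Longrightarrow> y \<in> L \<Longrightarrow> x - y \<in> L"
    and V_closed: "\<And>x. x \<in> L \<Longrightarrow> V x \<in> L"
    and P_closed: "\<And>x. x \<in> L \<Longrightarrow> P x \<in> L"
    and V_diff: "\<And>x y. x \<in> L \<Longrightarrow> y \<in> L \<Longrightarrow> V (x - y) = V x - V y"
    and P_diff: "\<And>x y. x \<in> L \<Longrightarrow> y \<in> L \<Longrightarrow> P (x - y) = P x - P y"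
    and P_idem: "\<And>x. x \<in> L \<Longrightarrow> P (P x) = P x"
    and commute: "\<And>x. x \<in> L \<Longrightarrow> P (V x) = V (P x)"
    and kernel_trivial: "\<And>y. y \<in> L \<Longrightarrow> V y - P y = 0 \<Longrightarrow> y = 0"
  shows "x \<in> L \<Longrightarrow> (V ^^ n) x = 0 \<Longrightarrow> P x = x"
proof (induction n arbitrary: x)
  case 0
  then show ?case using P_diff[of x x] by simp
next
  case (Suc n)
  have "P (V x) = V x"
    using Suc.IH[of "V x"] Suc.prems V_closed by (simp add: funpow_swap1)
  define y where "y = x - P x"
  have y: "y \<in> L" unfolding y_def using Suc.prems by (intro diff_closed P_closed)
  have "P y = 0"
    unfolding y_def using Suc.prems by (simp add: P_diff P_closed P_idem)
  moreover have "V y = 0"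
    unfolding y_def using Suc.prems \<open>P (V x) = V x\<close> by (simp add: V_diff P_closed commute)
  ultimately show ?case using kernel_trivial[OF y] by (simp add: y_def)
qed

lemma l2_finite_support:
  assumes "finite A" "A \<subseteq> S" "\<And>z. z \<notin> A \<Longrightarrow> f z = 0"
  shows "f \<in> l2 S"
proof -
  have "(\<lambda>x. (cmod (f x))\<^sup>2) summable_on S"
    by (rule summable_on_cong_neutral[where S = A and T = S, THEN iffD1]) (use assms in auto)
  then show ?thesis using assms unfolding l2_def by auto
qed

lemma l2norm_finite_support:
  assumes "finite A" "A \<subseteq> S" "\<And>z. z \<notin> A \<Longrightarrow> f z = 0"
  shows "l2norm S f = sqrt (\<Sum>z\<in>A. (cmod (f z))\<^sup>2)"
proof -
  have "infsum (\<lambda>x. (cmod (f x))\<^sup>2) S = infsum (\<lambda>x. (cmod (f x))\<^sup>2) A"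
    by (rule infsum_cong_neutral) (use assms in auto)
  then show ?thesis using assms(1) unfolding l2norm_def by simp
qed

lemma cmod_diff_squared_le: "(cmod (a - b))\<^sup>2 \<le> 2 * (cmod a)\<^sup>2 + 2 * (cmod b)\<^sup>2"
proof -
  have "(cmod (a - b))\<^sup>2 \<le> (cmod a + cmod b)\<^sup>2"
    by (simp add: norm_triangle_ineq4 power_mono)
  also have "\<dots> \<le> 2 * (cmod a)\<^sup>2 + 2 * (cmod b)\<^sup>2"
    using zero_le_power2[of "cmod a - cmod b"] by (simp add: power2_sum power2_diff)
  finally show ?thesis .
qed

lemma l2_diff:
  assumes "f \<in> l2 S" "g \<in> l2 S"
  shows "f - g \<in> l2 S"
proof -
  have "(\<lambda>x. 2 * (cmod (f x))\<^sup>2 + 2 * (cmod (g x))\<^sup>2) summable_on S"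
    using assms unfolding l2_def by (intro summable_on_add summable_on_cmult_right) auto
  then have "(\<lambda>x. (cmod (f x - g x))\<^sup>2) summable_on S"
    by (rule summable_on_comparison_test) (auto simp: cmod_diff_squared_le)
  then show ?thesis using assms unfolding l2_def by auto
qed

lemma bounded_op_diff:
  assumes "bounded_op S T" "f \<in> l2 S" "g \<in> l2 S"
  shows "T (f - g) = T f - T g"
proof -
  have "T f = T ((f - g) + g)" by simp
  also have "\<dots> = T (f - g) + T g"
    using assms l2_diff[of f S g] unfolding bounded_op_def plus_fun_def by blast
  finally show ?thesis by simp
qed

lemma bounded_op_l2: "bounded_op S T \<Longrightarrow> f \<in> l2 S \<Longrightarrow> T f \<in> l2 S"
  unfolding bounded_op_def by blast

lemma invertible_op_kernel_trivial:
  assumes "invertible_op S T" "f \<in> l2 S" "T f = 0"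
  shows "f = 0"
proof -
  obtain W where W: "bounded_op S W" "\<And>f. f \<in> l2 S \<Longrightarrow> W (T f) = f"
    using assms(1) unfolding invertible_op_def by blast
  have "0 \<in> l2 S" unfolding l2_def by simp
  then have "W 0 = 0" using bounded_op_diff[OF W(1), of 0 0] by simp
  then show ?thesis using W(2)[OF assms(2)] assms(3) by simp
qed

lemma invertible_op_norm_lower_bound:
  assumes "invertible_op S T"
  obtains C where "\<And>f. f \<in> l2 S \<Longrightarrow> T f \<in> l2 S \<Longrightarrow> l2norm S f \<le> C * l2norm S (T f)"
proof -
  obtain W C where "\<And>f. f \<in> l2 S \<Longrightarrow> W (T f) = f"
    and "\<And>g. g \<in> l2 S \<Longrightarrow> l2norm S (W g) \<le> C * l2norm S g"
    using assms unfolding invertible_op_def bounded_op_def by metis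
  then show thesis using that[of C] by metis
qed

lemma invertible_op_cong:
  assumes "invertible_op S T" "\<And>f. f \<in> l2 S \<Longrightarrow> T f = T' f"
  shows "invertible_op S T'"
  using assms unfolding invertible_op_def by (metis bounded_op_l2)

lemma IV_diff: "IV (f - g) = IV f - IV g"
  by (auto simp: IV_def)

lemma IV_l2:
  fixes J :: "'j set"
  assumes "f \<in> l2 (J \<times> Hidx)"
  shows "IV f \<in> l2 (J \<times> Hidx)"
proof -
  define S where "S = J \<times> Hidx"
  define A where "A = {z \<in> S. snd (snd z) < fst (snd z)}"
  define h where "h = (\<lambda>(j, (n, i)). (j, (n, Suc i)) :: 'j \<times> nat \<times> nat)"
  have "inj_on h A" by (auto simp: h_def inj_on_def)
  have "h ` A \<subseteq> S" by (auto simp: h_def A_def S_def Hidx_def)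
  then have "(\<lambda>x. (cmod (f x))\<^sup>2) summable_on h ` A"
    using assms unfolding l2_def S_def by (blast intro: summable_on_subset)
  then have "(\<lambda>x. (cmod (f (h x)))\<^sup>2) summable_on A"
    using summable_on_reindex[OF \<open>inj_on h A\<close>, of "\<lambda>x. (cmod (f x))\<^sup>2"]
    by (simp add: comp_def)
  moreover have "IV f z = (if z \<in> A then f (h z) else 0)" if "z \<in> S" for z
    using that by (auto simp: IV_def A_def S_def h_def split: prod.splits)
  ultimately have "(\<lambda>x. (cmod (IV f x))\<^sup>2) summable_on S"
    by (intro summable_on_cong_neutral[where S = A and T = S, THEN iffD1]) (auto simp: A_def)
  moreover have "IV f z = 0" if "z \<notin> S" for z
    using assms that by (auto simp: IV_def S_def l2_def Hidx_def split: prod.splits)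
  ultimately show ?thesis unfolding l2_def S_def by auto
qed

definition block_ones :: "'j \<Rightarrow> nat \<Rightarrow> ('j \<times> (nat \<times> nat)) \<Rightarrow> complex" where
  "block_ones j0 n = (\<lambda>(j, (m, i)). if j = j0 \<and> m = n \<and> 1 \<le> i \<and> i \<le> n then 1 else 0)"

lemma funpow_IV_block_ones:
  "(IV ^^ k) (block_ones j0 n) =
     (\<lambda>(j, (m, i)). if j = j0 \<and> m = n \<and> 1 \<le> i \<and> i + k \<le> n then 1 else 0)"
  by (induction k) (auto simp: block_ones_def IV_def Hidx_def)

lemma block_ones_l2: "j0 \<in> J \<Longrightarrow> block_ones j0 n \<in> l2 (J \<times> Hidx)"
  by (rule l2_finite_support[where A = "(\<lambda>i. (j0, (n, i))) ` {1..n}"])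
    (auto simp: block_ones_def Hidx_def)

lemma l2norm_block_ones:
  assumes "j0 \<in> J"
  shows "l2norm (J \<times> Hidx) (block_ones j0 n) = sqrt n"
proof -
  have "l2norm (J \<times> Hidx) (block_ones j0 n) =
      sqrt (\<Sum>z\<in>(\<lambda>i. (j0, (n, i))) ` {1..n}. (cmod (block_ones j0 n z))\<^sup>2)"
    by (rule l2norm_finite_support) (use assms in \<open>auto simp: block_ones_def Hidx_def\<close>)
  also have "(\<Sum>z\<in>(\<lambda>i. (j0, (n, i))) ` {1..n}. (cmod (block_ones j0 n z))\<^sup>2) = (\<Sum>i\<in>{1..n}. 1)"
    by (subst sum.reindex) (auto simp: inj_on_def block_ones_def)
  finally show ?thesis by simp
qed

lemma l2norm_IV_block_ones_diff:
  assumes "j0 \<in> J" "n \<ge> 1"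
  shows "l2norm (J \<times> Hidx) (IV (block_ones j0 n) - block_ones j0 n) = 1"
proof -
  have "IV (block_ones j0 n) - block_ones j0 n = (\<lambda>z. if z = (j0, (n, n)) then -1 else 0)"
    using funpow_IV_block_ones[of 1 j0 n] assms(2) by (auto simp: block_ones_def)
  moreover have "l2norm (J \<times> Hidx) (\<lambda>z. if z = (j0, (n, n)) then -1 else 0) = 1"
    by (subst l2norm_finite_support[where A = "{(j0, (n, n))}"]) (use assms in \<open>auto simp: Hidx_def\<close>)
  ultimately show ?thesis by simp
qed

lemma IV_minus_commuting_idempotent_not_invertible:
  assumes "j0 \<in> J"
    and P: "bounded_op (J \<times> Hidx) P" "idempotent_op (J \<times> Hidx) P"
      "\<forall>f\<in>l2 (J \<times> Hidx). P (IV f) = IV (P f)"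
    and T: "invertible_op (J \<times> Hidx) (\<lambda>f. IV f - P f)"
  shows False
proof -
  obtain C where C: "\<And>f. f \<in> l2 (J \<times> Hidx) \<Longrightarrow> IV f - P f \<in> l2 (J \<times> Hidx) \<Longrightarrow>
      l2norm (J \<times> Hidx) f \<le> C * l2norm (J \<times> Hidx) (IV f - P f)"
    using invertible_op_norm_lower_bound[OF T] by blast
  define n where "n = nat \<lceil>C\<^sup>2\<rceil> + 1"
  let ?x = "block_ones j0 n"
  have x: "?x \<in> l2 (J \<times> Hidx)" using block_ones_l2[OF assms(1)] .
  have "P ?x = ?x"
  proof (rule idempotent_fixes_nilpotent_vector[of "l2 (J \<times> Hidx)" IV P ?x n])
    show "(IV ^^ n) ?x = 0" by (auto simp: funpow_IV_block_ones)
    show "y = 0" if "y \<in> l2 (J \<times> Hidx)" "IV y - P y = 0" for y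
      using invertible_op_kernel_trivial[OF T that(1)] that(2) .
    show "P (y - z) = P y - P z" if "y \<in> l2 (J \<times> Hidx)" "z \<in> l2 (J \<times> Hidx)" for y z
      using bounded_op_diff[OF P(1) that] .
  qed (use x P in \<open>simp_all add: l2_diff IV_l2 bounded_op_l2 IV_diff idempotent_op_def\<close>)
  moreover have "IV ?x - ?x \<in> l2 (J \<times> Hidx)" using l2_diff[OF IV_l2[OF x] x] .
  ultimately have "sqrt n \<le> C"
    using C[OF x] by (simp add: l2norm_block_ones[OF assms(1)]
        l2norm_IV_block_ones_diff[OF assms(1)] n_def)
  moreover have "C < sqrt n"
    by (rule real_less_rsqrt) (simp add: n_def, linarith)
  ultimately show False by simp
qed

theorem lemma2p2:
  fixes J :: "'j set"
  assumes "J \<noteq> {}"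
  shows "\<not> (\<exists>P. bounded_op (J \<times> Hidx) P \<and> idempotent_op (J \<times> Hidx) P \<and>
              (\<forall>f\<in>l2 (J \<times> Hidx). P (IV f) = IV (P f)) \<and>
              invertible_op (J \<times> Hidx) (\<lambda>f x. IV f x - P f x))
         \<and> \<not> strongly_clean_op (J \<times> Hidx) IV"
proof -
  obtain j0 where "j0 \<in> J" using assms by blast
  have no_P: False
    if "bounded_op (J \<times> Hidx) P" "idempotent_op (J \<times> Hidx) P"
      "\<forall>f\<in>l2 (J \<times> Hidx). P (IV f) = IV (P f)"
      "invertible_op (J \<times> Hidx) (\<lambda>f x. IV f x - P f x)" for P
    using IV_minus_commuting_idempotent_not_invertible[OF \<open>j0 \<in> J\<close> that(1-3)] that(4)
    by (simp add: fun_diff_def)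
  moreover have "\<not> strongly_clean_op (J \<times> Hidx) IV"
  proof
    assume "strongly_clean_op (J \<times> Hidx) IV"
    then obtain U P where U: "invertible_op (J \<times> Hidx) U"
      and P: "bounded_op (J \<times> Hidx) P" "idempotent_op (J \<times> Hidx) P"
        "\<forall>f\<in>l2 (J \<times> Hidx). P (IV f) = IV (P f)"
      and decomp: "\<forall>f\<in>l2 (J \<times> Hidx). IV f = (\<lambda>x. U f x + P f x)"
      unfolding strongly_clean_op_def by blast
    have "invertible_op (J \<times> Hidx) (\<lambda>f x. IV f x - P f x)"
      by (rule invertible_op_cong[OF U]) (simp add: decomp)
    then show False by (rule no_P[OF P])
  qed
  ultimately show ?thesis by blast
qed

end
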